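(* Let $\mathfrak{g}$ be a semi-simple real Lie algebra with a faithful finite dimensional real representation $\mathfrak{g}\to\mathrm{End}(W)$, and suppose there is a symmetric bilinear $\mathfrak{g}$-equivariant map $\wedge:W\times W\to W^*$ which does not vanish identically on any $2$-dimensional linear subspace of $W$. Let $\mu:\mathfrak{sl}_2(\mathbf{R})\to\mathfrak{g}$ be an injective Lie algebra morphism. Then every highest weight of the representation $\mathfrak{sl}_2(\mathbf{R})\to\mathfrak{g}\to\mathrm{End}(W)$ is at most $4$, and at most one irreducible summand has highest weight $4$.
   Context: Weights of $\mathfrak{sl}_2(\mathbf{R})$-representations are taken with respect to the Cartan subalgebra of diagonal matrices, normalized so that the irreducible representation of dimension $n+1$ (on homogeneous polynomials of degree $n$ in two variables) has weights $-n,-n+2,\dots,n-2,n$ and highest weight $n$; i.e. weights are the eigenvalues of $\mathrm{diag}(1,-1)$. $W^*$ is the dual representation and equivariance of $\wedge$ means $X\cdot(a\wedge b)=(X\cdot a)\wedge b+a\wedge(X\cdot b)$. *)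

theory Defs
  imports "HOL-Analysis.Analysis"
begin

text \<open>The representation space W is real^'n; End(W) is real^'n^'n acting by *v.
  Since the representation of g is faithful, g is identified with its image,
  a Lie subalgebra of gl(W).\<close>

definition lie_bracket :: "real^'n^'n \<Rightarrow> real^'n^'n \<Rightarrow> real^'n^'n" where
  "lie_bracket A B = A ** B - B ** A"

definition lie_subalgebra :: "(real^'n^'n) set \<Rightarrow> bool" where
  "lie_subalgebra g \<longleftrightarrow> subspace g \<and> (\<forall>A\<in>g. \<forall>B\<in>g. lie_bracket A B \<in> g)"

definition lie_ideal :: "(real^'n^'n) set \<Rightarrow> (real^'n^'n) set \<Rightarrow> bool" where
  "lie_ideal g I \<longleftrightarrow> subspace I \<and> I \<subseteq> g \<and> (\<forall>A\<in>g. \<forall>B\<in>I. lie_bracket A B \<in> I)"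

definition derived_alg :: "(real^'n^'n) set \<Rightarrow> (real^'n^'n) set" where
  "derived_alg I = span {lie_bracket A B | A B. A \<in> I \<and> B \<in> I}"

definition lie_solvable :: "(real^'n^'n) set \<Rightarrow> bool" where
  "lie_solvable I \<longleftrightarrow> (\<exists>k. (derived_alg ^^ k) I = {0})"

definition semisimple :: "(real^'n^'n) set \<Rightarrow> bool" where
  "semisimple g \<longleftrightarrow> lie_subalgebra g \<and> (\<forall>I. lie_ideal g I \<and> lie_solvable I \<longrightarrow> I = {0})"

definition sl2 :: "(real^2^2) set" where
  "sl2 = {M. M$1$1 + M$2$2 = 0}"

definition sl2_bracket :: "real^2^2 \<Rightarrow> real^2^2 \<Rightarrow> real^2^2" where
  "sl2_bracket X Y = X ** Y - Y ** X"

definition sl2_H :: "real^2^2" where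
  "sl2_H = (\<chi> i j. if i = j then (if i = 1 then 1 else -1) else 0)"

definition lie_hom_sl2 :: "(real^2^2 \<Rightarrow> real^'n^'n) \<Rightarrow> (real^'n^'n) set \<Rightarrow> bool" where
  "lie_hom_sl2 \<mu> g \<longleftrightarrow>
     \<mu> ` sl2 \<subseteq> g \<and>
     (\<forall>X\<in>sl2. \<forall>Y\<in>sl2. \<forall>s t. \<mu> (s *\<^sub>R X + t *\<^sub>R Y) = s *\<^sub>R \<mu> X + t *\<^sub>R \<mu> Y) \<and>
     (\<forall>X\<in>sl2. \<forall>Y\<in>sl2. \<mu> (sl2_bracket X Y) = lie_bracket (\<mu> X) (\<mu> Y))"

definition sl2_invariant :: "(real^2^2 \<Rightarrow> real^'n^'n) \<Rightarrow> (real^'n) set \<Rightarrow> bool" where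
  "sl2_invariant \<mu> V \<longleftrightarrow> subspace V \<and> (\<forall>X\<in>sl2. \<forall>v\<in>V. \<mu> X *v v \<in> V)"

definition sl2_irreducible :: "(real^2^2 \<Rightarrow> real^'n^'n) \<Rightarrow> (real^'n) set \<Rightarrow> bool" where
  "sl2_irreducible \<mu> V \<longleftrightarrow> sl2_invariant \<mu> V \<and> V \<noteq> {0} \<and>
     (\<forall>U. sl2_invariant \<mu> U \<and> U \<subseteq> V \<longrightarrow> U = {0} \<or> U = V)"

definition irred_decomposition :: "(real^2^2 \<Rightarrow> real^'n^'n) \<Rightarrow> (real^'n) set set \<Rightarrow> bool" where
  "irred_decomposition \<mu> \<V> \<longleftrightarrow> finite \<V> \<and>
     (\<forall>V\<in>\<V>. sl2_irreducible \<mu> V) \<and>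
     (\<forall>V\<in>\<V>. V \<inter> span (\<Union>(\<V> - {V})) = {0}) \<and>
     span (\<Union>\<V>) = UNIV"

definition highest_weight :: "(real^2^2 \<Rightarrow> real^'n^'n) \<Rightarrow> (real^'n) set \<Rightarrow> real" where
  "highest_weight \<mu> V = Max {w. \<exists>v\<in>V. v \<noteq> 0 \<and> \<mu> sl2_H *v v = w *\<^sub>R v}"

end

theory Submission
  imports Defs
begin

(*
  Let H = mu(diag(1,-1)), E = mu(e), F = mu(f) for the standard basis
  of sl_2(R), so that [H,E] = 2E, [H,F] = -2F, [E,F] = H on W = R^n.  Since ad H has only
  finitely many eigenvalues, E and F are nilpotent; hence every nonzero invariant subspace
  contains an H-eigenvector, and the F-string through a weight-m vector killed by E ends
  in a vector of weight -m.  So all weights of W lie in [-N, N], N the top weight.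
  By H-equivariance, wedge a b (a functional on W) has weight -(p+q) when a, b have
  weights p, q, so it vanishes when p + q > N.  If N > 4, a top weight vector v and F v
  (weights N, N-2) span a plane on which wedge vanishes; if N = 4, two weight-4 vectors
  from different summands do.  Both contradict the nonvanishing hypothesis.
*)

subsection \<open>Linear algebra\<close>

lemma eigenvector_combination_zero:
  fixes T :: "'a::real_vector \<Rightarrow> 'a"
  assumes lin: "linear T" and fin: "finite K"
    and ev: "\<forall>k\<in>K. T (v k) = lam k *\<^sub>R v k" and inj: "inj_on lam K"
    and sum0: "(\<Sum>k\<in>K. c k *\<^sub>R v k) = 0"
  shows "\<forall>k\<in>K. c k *\<^sub>R v k = 0"
  using fin ev inj sum0
proof (induction K arbitrary: c rule: finite_induct)
  case empty
  then show ?case by simp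
next
  case (insert j K)
  have s: "c j *\<^sub>R v j + (\<Sum>k\<in>K. c k *\<^sub>R v k) = 0"
    using insert.prems(3) insert.hyps by simp
  have "T (c j *\<^sub>R v j + (\<Sum>k\<in>K. c k *\<^sub>R v k)) = 0"
    using s lin by (simp add: linear_0)
  hence t: "c j *\<^sub>R (lam j *\<^sub>R v j) + (\<Sum>k\<in>K. c k *\<^sub>R (lam k *\<^sub>R v k)) = 0"
    using insert.prems(1) lin by (simp add: linear_add linear_scale linear_sum)
  text \<open>Subtracting lam j times the relation eliminates the j-th term.\<close>
  have "(\<Sum>k\<in>K. (c k * (lam k - lam j)) *\<^sub>R v k)
      = (c j *\<^sub>R (lam j *\<^sub>R v j) + (\<Sum>k\<in>K. c k *\<^sub>R (lam k *\<^sub>R v k)))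
        - lam j *\<^sub>R (c j *\<^sub>R v j + (\<Sum>k\<in>K. c k *\<^sub>R v k))"
    by (simp add: scaleR_right.sum algebra_simps sum_subtractf[symmetric])
  also have "\<dots> = 0" using t s by simp
  finally have "\<forall>k\<in>K. (c k * (lam k - lam j)) *\<^sub>R v k = 0"
    using insert.IH[of "\<lambda>k. c k * (lam k - lam j)"] insert.prems by auto
  moreover have "lam k \<noteq> lam j" if "k \<in> K" for k
    using insert.prems(2) insert.hyps that by (metis inj_on_contraD insertCI)
  ultimately have K0: "\<forall>k\<in>K. c k *\<^sub>R v k = 0" by auto
  then have "c j *\<^sub>R v j = 0" using s by (simp add: sum.neutral)
  then show ?case using K0 by simp
qed

text \<open>A linear endomorphism of a finite-dimensional space has finitely many eigenvalues:
  otherwise DIM + 1 eigenvectors for distinct eigenvalues would be independent.\<close>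

lemma finite_eigenvalues:
  fixes T :: "'a::euclidean_space \<Rightarrow> 'a"
  assumes lin: "linear T"
  shows "finite {l. \<exists>v. v \<noteq> 0 \<and> T v = l *\<^sub>R v}"
proof (rule ccontr)
  let ?L = "{l. \<exists>v. v \<noteq> 0 \<and> T v = l *\<^sub>R v}"
  assume "infinite ?L"
  then obtain L where L: "L \<subseteq> ?L" "finite L" "card L = Suc DIM('a)"
    using infinite_arbitrarily_large by blast
  define v where "v l = (SOME v. v \<noteq> 0 \<and> T v = l *\<^sub>R v)" for l
  have vp: "v l \<noteq> 0 \<and> T (v l) = l *\<^sub>R v l" if "l \<in> L" for l
    unfolding v_def by (rule someI_ex) (use L(1) that in auto)
  have inj: "inj_on v L"
  proof (rule inj_onI)
    fix a b assume ab: "a \<in> L" "b \<in> L" "v a = v b"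
    then have "a *\<^sub>R v a = b *\<^sub>R v a" using vp by metis
    then show "a = b" using vp[OF ab(1)] by simp
  qed
  have "independent (v ` L)"
    unfolding independent_explicit
  proof (intro conjI allI impI ballI)
    show "finite (v ` L)" using L by simp
    fix c x assume s: "(\<Sum>x\<in>v ` L. c x *\<^sub>R x) = 0" and x: "x \<in> v ` L"
    have "(\<Sum>l\<in>L. c (v l) *\<^sub>R v l) = 0" using s inj by (simp add: sum.reindex)
    then have "\<forall>l\<in>L. c (v l) *\<^sub>R v l = 0"
      using eigenvector_combination_zero[OF lin L(2), of v id "\<lambda>l. c (v l)"] vp by auto
    then show "c x = 0" using x vp by auto
  qed
  then have "card (v ` L) \<le> DIM('a)"
    using independent_bound_general dim_subset_UNIV order_trans by blast
  then show False using card_image[OF inj] L(3) by simp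
qed

lemma numeral_times_vec [simp]: "(numeral k :: real^'n) * v = numeral k *\<^sub>R v"
  by (simp add: vec_eq_iff)

lemma uminus_matrix_vector_mult: "(- A) *v x = - (A *v (x :: real^'n))"
  by (simp add: vec_eq_iff matrix_vector_mult_def sum_negf)

definition mv_pow :: "real^'n^'n \<Rightarrow> nat \<Rightarrow> real^'n \<Rightarrow> real^'n" where
  "mv_pow A k = (\<lambda>x. A *v x) ^^ k"

lemma linear_mv_pow: "linear (mv_pow A k)"
  unfolding mv_pow_def
  by (induction k)
    (simp_all add: linear_id[unfolded id_def] linear_compose[OF _ matrix_vector_mul_linear, unfolded o_def])

lemma mv_pow_0 [simp]: "mv_pow A 0 x = x"
  and mv_pow_Suc: "mv_pow A (Suc k) x = A *v mv_pow A k x"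
  by (simp_all add: mv_pow_def)

lemma mv_pow_linear_simps:
  "mv_pow A k (x + y) = mv_pow A k x + mv_pow A k y"
  "mv_pow A k (x - y) = mv_pow A k x - mv_pow A k y"
  "mv_pow A k (r *\<^sub>R x) = r *\<^sub>R mv_pow A k x"
  "mv_pow A k 0 = 0"
  using linear_mv_pow[of A k] by (simp_all add: linear_add linear_diff linear_scale linear_0)

lemma mv_pow_closed:
  assumes "\<And>v. v \<in> V \<Longrightarrow> A *v v \<in> V" and "x \<in> V"
  shows "mv_pow A k x \<in> V"
  by (induction k) (simp_all add: assms mv_pow_Suc)

lemma last_nonzero_iterate:
  assumes "mv_pow A k x = 0" and "x \<noteq> 0"
  shows "\<exists>j. mv_pow A j x \<noteq> 0 \<and> mv_pow A (Suc j) x = 0"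
  using assms
proof (induction k)
  case (Suc k)
  then show ?case by (cases "mv_pow A k x = 0") auto
qed simp

text \<open>An ad(H)-eigenvector E with nonzero eigenvalue c is nilpotent: each power E^k
  is an ad(H)-eigenvector with eigenvalue k c, and ad(H) has only finitely many
  eigenvalues on the finite-dimensional space of matrices.\<close>

lemma ad_eigenvector_nilpotent:
  fixes H E :: "real^'n^'n"
  assumes HE: "\<And>x. H *v (E *v x) = E *v (H *v x) + c *\<^sub>R (E *v x)" and c: "c \<noteq> 0"
  shows "\<exists>k. \<forall>x. mv_pow E k x = 0"
proof -
  have H_pow: "H *v mv_pow E k x = mv_pow E k (H *v x) + (real k * c) *\<^sub>R mv_pow E k x" for k x
  proof (induction k)
    case (Suc k)
    then show ?case
      by (simp add: mv_pow_Suc HE matrix_vector_right_distrib matrix_vector_mult_scaleR algebra_simps)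
  qed simp
  define P where "P k = ((\<lambda>A. E ** A) ^^ k) (mat 1)" for k
  have P: "P k *v x = mv_pow E k x" for k x
    by (induction k arbitrary: x)
      (simp_all add: P_def mv_pow_Suc matrix_vector_mul_assoc[symmetric])
  define ad where "ad A = H ** A - A ** H" for A :: "real^'n^'n"
  have ad: "ad A *v x = H *v (A *v x) - A *v (H *v x)" for A x
    by (simp add: ad_def matrix_vector_mult_diff_rdistrib matrix_vector_mul_assoc)
  have "linear ad"
    by (rule linearI)
      (simp_all add: matrix_eq ad matrix_vector_mult_add_rdistrib matrix_vector_right_distrib
        scaleR_matrix_vector_assoc[symmetric] matrix_vector_mult_scaleR algebra_simps)
  then have fin: "finite {l. \<exists>A. A \<noteq> 0 \<and> ad A = l *\<^sub>R A}"
    by (rule finite_eigenvalues)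
  have ad_P: "ad (P k) = (real k * c) *\<^sub>R P k" for k
    by (simp add: matrix_eq ad scaleR_matrix_vector_assoc[symmetric] P H_pow)
  show ?thesis
  proof (rule ccontr)
    assume "\<not> ?thesis"
    then have "P k \<noteq> 0" for k
      by (metis P matrix_vector_mult_0)
    then have "range (\<lambda>k. real k * c) \<subseteq> {l. \<exists>A. A \<noteq> 0 \<and> ad A = l *\<^sub>R A}"
      using ad_P by blast
    moreover have "infinite (range (\<lambda>k. real k * c))"
      using c by (intro range_inj_infinite) (auto simp: inj_def)
    ultimately show False using fin finite_subset by blast
  qed
qed

subsection \<open>sl_2-triples and their weights\<close>

locale sl2_triple =
  fixes H E F :: "real^'n^'n"
  assumes H_E: "\<And>x. H *v (E *v x) = E *v (H *v x) + 2 *\<^sub>R (E *v x)"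
    and H_F: "\<And>x. H *v (F *v x) = F *v (H *v x) - 2 *\<^sub>R (F *v x)"
    and E_F: "\<And>x. E *v (F *v x) = F *v (E *v x) + H *v x"
begin

definition weights :: "real set" where
  "weights = {l. \<exists>v. v \<noteq> 0 \<and> H *v v = l *\<^sub>R v}"

definition top_weight :: real where
  "top_weight = Max weights"

lemma E_nilpotent: "\<exists>k. \<forall>x. mv_pow E k x = 0"
  using ad_eigenvector_nilpotent[of H E 2] H_E by simp

lemma F_nilpotent: "\<exists>k. \<forall>x. mv_pow F k x = 0"
  using ad_eigenvector_nilpotent[of H F "-2"] H_F by simp

text \<open>Exchanging E and F and negating H gives again an sl_2-triple (the Weyl group
  symmetry); it reflects the weights.\<close>

lemma reflected_triple: "sl2_triple (-H) F E"
  by unfold_locales (simp_all add: uminus_matrix_vector_mult vec.neg H_E H_F E_F algebra_simps)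

lemma H_F_pow: "H *v mv_pow F j z = mv_pow F j (H *v z) - (2 * real j) *\<^sub>R mv_pow F j z"
proof (induction j)
  case (Suc j)
  have "H *v mv_pow F (Suc j) z = F *v (H *v mv_pow F j z) - 2 *\<^sub>R (F *v mv_pow F j z)"
    by (simp add: mv_pow_Suc H_F)
  also have "\<dots> = mv_pow F (Suc j) (H *v z) - (2 * real (Suc j)) *\<^sub>R mv_pow F (Suc j) z"
    unfolding Suc
    by (simp add: mv_pow_Suc matrix_vector_mult_diff_distrib matrix_vector_mult_scaleR algebra_simps)
  finally show ?case .
qed simp

lemma E_F_pow:
  "E *v mv_pow F (Suc j) z
     = mv_pow F (Suc j) (E *v z) + (real j + 1) *\<^sub>R mv_pow F j (H *v z - real j *\<^sub>R z)"
proof (induction j)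
  case 0
  then show ?case by (simp add: mv_pow_Suc E_F)
next
  case (Suc j)
  have "E *v mv_pow F (Suc (Suc j)) z = F *v (E *v mv_pow F (Suc j) z) + H *v mv_pow F (Suc j) z"
    by (simp add: mv_pow_Suc E_F)
  also have "\<dots> = mv_pow F (Suc (Suc j)) (E *v z)
      + (real (Suc j) + 1) *\<^sub>R mv_pow F (Suc j) (H *v z - real (Suc j) *\<^sub>R z)"
    unfolding Suc H_F_pow
    by (simp only: mv_pow_Suc matrix_vector_right_distrib matrix_vector_mult_diff_distrib
        matrix_vector_mult_scaleR mv_pow_linear_simps) (simp add: algebra_simps)
  finally show ?case .
qed

text \<open>The F-string through a weight vector of weight m killed by E ends in a weight
  vector of weight -m (its length forces m to be the number of steps).\<close>

lemma string_reflection: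
  assumes x: "x \<noteq> 0" "E *v x = 0" "H *v x = m *\<^sub>R x"
  shows "-m \<in> weights"
proof -
  obtain k where "mv_pow F k x = 0" using F_nilpotent by blast
  then obtain j where j: "mv_pow F j x \<noteq> 0" "mv_pow F (Suc j) x = 0"
    using last_nonzero_iterate x(1) by blast
  have "H *v x - real j *\<^sub>R x = (m - real j) *\<^sub>R x" using x by (simp add: algebra_simps)
  then have "0 = ((real j + 1) * (m - real j)) *\<^sub>R mv_pow F j x"
    using E_F_pow[of j x] j(2) x(2) by (simp add: mv_pow_linear_simps)
  then have "m = real j" using j(1) by (simp add: add_nonneg_eq_0_iff)
  then have "H *v mv_pow F j x = (- m) *\<^sub>R mv_pow F j x"
    using x by (simp add: H_F_pow mv_pow_linear_simps algebra_simps)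
  then show ?thesis using j(1) unfolding weights_def by blast
qed

text \<open>Starting from z killed by E and by some power of F, the vectors
  H z - j z, obtained by applying E F^(j+1), descend to an H-eigenvector.\<close>

lemma eigenvector_from_primitive:
  assumes V: "subspace V" "\<And>v. v \<in> V \<Longrightarrow> H *v v \<in> V"
  shows "z \<in> V \<Longrightarrow> z \<noteq> 0 \<Longrightarrow> E *v z = 0 \<Longrightarrow> mv_pow F j z = 0 \<Longrightarrow>
    \<exists>w\<in>V. w \<noteq> 0 \<and> (\<exists>l. H *v w = l *\<^sub>R w)"
proof (induction j arbitrary: z)
  case 0
  then show ?case by simp
next
  case (Suc j)
  define z' where "z' = H *v z - real j *\<^sub>R z"
  show ?case
  proof (cases "z' = 0")
    case True
    then show ?thesis using Suc.prems by (auto simp: z'_def)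
  next
    case False
    have "z' \<in> V" unfolding z'_def using Suc.prems V by (simp add: subspace_diff subspace_scale)
    moreover have "E *v z' = 0"
      using H_E[of z] Suc.prems(3)
      by (simp add: z'_def matrix_vector_mult_diff_distrib matrix_vector_mult_scaleR)
    moreover have "(real j + 1) *\<^sub>R mv_pow F j z' = 0"
      using E_F_pow[of j z] Suc.prems(3,4) by (simp add: z'_def mv_pow_linear_simps)
    then have "mv_pow F j z' = 0" by (simp add: add_nonneg_eq_0_iff)
    ultimately show ?thesis using Suc.IH False by blast
  qed
qed

text \<open>Every nonzero subspace invariant under H and E contains an H-eigenvector: push a
  vector up with E until it is killed, then descend with the previous lemma.\<close>

lemma invariant_subspace_eigenvector:
  assumes V: "subspace V" "V \<noteq> {0}"
    and inv: "\<And>v. v \<in> V \<Longrightarrow> H *v v \<in> V" "\<And>v. v \<in> V \<Longrightarrow> E *v v \<in> V"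
  shows "\<exists>w\<in>V. w \<noteq> 0 \<and> (\<exists>l. H *v w = l *\<^sub>R w)"
proof -
  obtain x where x: "x \<in> V" "x \<noteq> 0" using V subspace_0 by blast
  obtain k where "mv_pow E k x = 0" using E_nilpotent by blast
  then obtain j where j: "mv_pow E j x \<noteq> 0" "mv_pow E (Suc j) x = 0"
    using last_nonzero_iterate x(2) by blast
  obtain kf where "mv_pow F kf (mv_pow E j x) = 0" using F_nilpotent by blast
  moreover have "E *v mv_pow E j x = 0" using j(2) by (simp add: mv_pow_Suc)
  ultimately show ?thesis
    using eigenvector_from_primitive[OF V(1) inv(1) mv_pow_closed[OF inv(2) x(1)] j(1)] by blast
qed

lemma finite_weights: "finite weights"
  unfolding weights_def by (rule finite_eigenvalues) simp

lemma weights_nonempty: "weights \<noteq> {}"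
proof -
  have "(UNIV :: (real^'n) set) \<noteq> {0}"
    by (metis UNIV_I singletonD vec_eq_iff zero_index zero_neq_one one_index)
  then show ?thesis
    using invariant_subspace_eigenvector[of UNIV] unfolding weights_def by auto
qed

lemma top_weight: "top_weight \<in> weights" "l \<in> weights \<Longrightarrow> l \<le> top_weight"
  unfolding top_weight_def using finite_weights weights_nonempty by auto

lemma raise_weight: "H *v v = l *\<^sub>R v \<Longrightarrow> H *v (E *v v) = (l + 2) *\<^sub>R (E *v v)"
  and lower_weight: "H *v v = l *\<^sub>R v \<Longrightarrow> H *v (F *v v) = (l - 2) *\<^sub>R (F *v v)"
  by (simp_all add: H_E H_F matrix_vector_mult_scaleR algebra_simps)

text \<open>The weights are bounded below by minus the top weight: a lowest weight vector
  is killed by F, so the reflected string produces the weight -(lowest weight).\<close>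

lemma weights_lower_bound:
  assumes "l \<in> weights"
  shows "- top_weight \<le> l"
proof -
  define m where "m = Min weights"
  have m: "m \<in> weights" "\<And>l. l \<in> weights \<Longrightarrow> m \<le> l"
    using finite_weights weights_nonempty unfolding m_def by auto
  obtain u where u: "u \<noteq> 0" "H *v u = m *\<^sub>R u" using m(1) unfolding weights_def by auto
  have "F *v u = 0"
  proof (rule ccontr)
    assume "F *v u \<noteq> 0"
    then have "m - 2 \<in> weights" using lower_weight[OF u(2)] unfolding weights_def by blast
    then show False using m(2) by fastforce
  qed
  moreover have "(- H) *v u = (- m) *\<^sub>R u"
    using u(2) by (simp add: uminus_matrix_vector_mult)
  ultimately have "- (- m) \<in> sl2_triple.weights (- H)"
    using sl2_triple.string_reflection[OF reflected_triple u(1)] by blast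
  then have "- m \<in> weights"
    unfolding sl2_triple.weights_def[OF reflected_triple] weights_def
    by (simp add: uminus_matrix_vector_mult) (metis minus_minus scaleR_minus_left)
  then show ?thesis using top_weight(2) m(2)[OF assms] by fastforce
qed

end

subsection \<open>An H-equivariant symmetric wedge\<close>

locale sl2_wedge = sl2_triple H E F for H E F :: "real^'n^'n" +
  fixes wedge :: "real^'n \<Rightarrow> real^'n \<Rightarrow> real^'n \<Rightarrow> real"
  assumes wedge_linear: "\<And>a b. linear (wedge a b)"
    and wedge_linear_left: "\<And>b c. linear (\<lambda>a. wedge a b c)"
    and wedge_sym: "\<And>a b. wedge a b = wedge b a"
    and wedge_H: "\<And>a b c. wedge (H *v a) b c + wedge a (H *v b) c = - wedge a b (H *v c)"
    and wedge_nonvanishing: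
      "\<And>U. subspace U \<Longrightarrow> dim U = 2 \<Longrightarrow> \<exists>a\<in>U. \<exists>b\<in>U. \<exists>c. wedge a b c \<noteq> 0"
begin

lemma wedge_left_combination:
  "wedge (u *\<^sub>R x + v *\<^sub>R y) z c = u * wedge x z c + v * wedge y z c"
  using linear_add[OF wedge_linear_left, of "u *\<^sub>R x" "v *\<^sub>R y"]
    linear_scale[OF wedge_linear_left, of u x] linear_scale[OF wedge_linear_left, of v y] by simp

text \<open>For weight vectors a, b of weights p, q the functional wedge a b has weight
  -(p+q); if that is not a weight, H + (p+q) is invertible and wedge a b vanishes.\<close>

lemma weight_wedge_vanishes:
  assumes a: "H *v a = p *\<^sub>R a" and b: "H *v b = q *\<^sub>R b" and nw: "- (p + q) \<notin> weights"
  shows "wedge a b c = 0"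
proof -
  define T where "T c = H *v c + (p + q) *\<^sub>R c" for c
  have wedge_T: "wedge a b (T c) = 0" for c
  proof -
    have "wedge a (H *v b) c = q * wedge a b c"
      using b wedge_left_combination[of q b 0 b a c] wedge_sym by simp
    moreover have "wedge (H *v a) b c = p * wedge a b c"
      using a wedge_left_combination[of p a 0 a b c] by simp
    ultimately show ?thesis
      using wedge_H[of a b c] wedge_linear[of a b]
      by (simp add: T_def linear_add linear_scale algebra_simps)
  qed
  have "linear T"
    unfolding T_def by (simp add: linear_compose_add linear_compose_scale_right linear_id[unfolded id_def])
  moreover have "inj T"
  proof (rule injI)
    fix x y assume "T x = T y"
    then have "H *v (x - y) = (- (p + q)) *\<^sub>R (x - y)"
      unfolding T_def by (simp add: matrix_vector_mult_diff_distrib algebra_simps)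
    then have "x - y = 0" using nw unfolding weights_def by blast
    then show "x = y" by simp
  qed
  ultimately obtain d where "c = T d" using linear_inj_imp_surj by blast
  then show ?thesis using wedge_T by simp
qed

text \<open>Bilinearity and symmetry: if wedge vanishes on the pairs (a,a), (a,b), (b,b) of
  two independent vectors, it vanishes on the plane they span, which is excluded.\<close>

lemma wedge_nonzero_on_pair:
  assumes a: "a \<noteq> 0" and b: "b \<notin> span {a}"
    and aa: "\<forall>c. wedge a a c = 0" and ab: "\<forall>c. wedge a b c = 0" and bb: "\<forall>c. wedge b b c = 0"
  shows False
proof -
  have "independent (insert b {a})" using independent_insertI[OF b] a by simp
  moreover have "b \<noteq> a" using b span_base[of a "{a}"] by auto
  ultimately have "dim (span {b, a}) = 2" using dim_span_eq_card_independent by fastforce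
  then obtain x y c where xy: "x \<in> span {b, a}" "y \<in> span {b, a}" "wedge x y c \<noteq> 0"
    using wedge_nonvanishing subspace_span by blast
  have comb: "\<exists>k t. z = k *\<^sub>R b + t *\<^sub>R a" if "z \<in> span {b, a}" for z
    using that by (auto simp: span_breakdown_eq span_singleton algebra_simps) (metis add.commute)
  obtain k1 t1 k2 t2 where x: "x = k1 *\<^sub>R b + t1 *\<^sub>R a" and y: "y = k2 *\<^sub>R b + t2 *\<^sub>R a"
    using comb xy(1,2) by blast
  have ba: "\<forall>c. wedge b a c = 0" using ab wedge_sym by metis
  have "wedge y b c = 0" "wedge y a c = 0"
    using aa ab ba bb by (simp_all add: y wedge_left_combination)
  then have "wedge x y c = 0" using wedge_sym by (metis x wedge_left_combination mult_zero_right add_0)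
  then show False using xy(3) by simp
qed

lemma eigenvector_not_in_span:
  assumes "H *v a = p *\<^sub>R a" "H *v b = q *\<^sub>R b" "b \<noteq> 0" "p \<noteq> q"
  shows "b \<notin> span {a}"
  using assms by (auto simp: span_singleton matrix_vector_mult_scaleR)

text \<open>Weight vectors whose pairwise weight sums exceed the top weight are proportional,
  since then all wedges among them vanish.\<close>

lemma high_weight_vectors_dependent:
  assumes a: "a \<noteq> 0" "H *v a = p *\<^sub>R a" and b: "H *v b = q *\<^sub>R b"
    and large: "top_weight < 2 * p" "top_weight < p + q" "top_weight < 2 * q"
  shows "b \<in> span {a}"
proof (rule ccontr)
  have nw: "- s \<notin> weights" if "top_weight < s" for s
    using weights_lower_bound that by force
  assume "b \<notin> span {a}"
  then show False
  proof (rule wedge_nonzero_on_pair[OF a(1)])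
    show "\<forall>c. wedge a a c = 0" using weight_wedge_vanishes[OF a(2) a(2)] nw[of "p + p"] large by simp
    show "\<forall>c. wedge a b c = 0" using weight_wedge_vanishes[OF a(2) b] nw[of "p + q"] large by simp
    show "\<forall>c. wedge b b c = 0" using weight_wedge_vanishes[OF b b] nw[of "q + q"] large by simp
  qed
qed

text \<open>The top weight is at most 4: otherwise a top weight vector v and F v (of weight
  top - 2) would be independent with all pairwise weight sums above the top weight.\<close>

lemma top_weight_le_4: "top_weight \<le> 4"
proof (rule ccontr)
  let ?N = top_weight
  assume "\<not> ?N \<le> 4"
  obtain v where v: "v \<noteq> 0" "H *v v = ?N *\<^sub>R v" using top_weight(1) unfolding weights_def by auto
  have "E *v v = 0"
  proof (rule ccontr)
    assume "E *v v \<noteq> 0"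
    then have "?N + 2 \<in> weights" using raise_weight[OF v(2)] unfolding weights_def by blast
    then show False using top_weight(2) by fastforce
  qed
  then have "E *v (F *v v) = ?N *\<^sub>R v" using E_F[of v] v by simp
  then have "F *v v \<noteq> 0" using v \<open>\<not> ?N \<le> 4\<close> by auto
  then have "F *v v \<notin> span {v}"
    using eigenvector_not_in_span[OF v(2) lower_weight[OF v(2)]] by simp
  moreover have "F *v v \<in> span {v}"
    using high_weight_vectors_dependent[OF v lower_weight[OF v(2)]] \<open>\<not> ?N \<le> 4\<close> by simp
  ultimately show False by contradiction
qed

lemma top_weight_vectors_dependent:
  assumes "0 < top_weight" "a \<noteq> 0" "H *v a = top_weight *\<^sub>R a" "H *v b = top_weight *\<^sub>R b"
  shows "b \<in> span {a}"
  by (rule high_weight_vectors_dependent) (use assms in auto)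

end

subsection \<open>The sl_2-representation given by mu\<close>

definition sl2_E :: "real^2^2" where
  "sl2_E = (\<chi> i j. if i = 1 \<and> j = 2 then 1 else 0)"

definition sl2_F :: "real^2^2" where
  "sl2_F = (\<chi> i j. if i = 2 \<and> j = 1 then 1 else 0)"

lemma sl2_basis_mem: "sl2_H \<in> sl2" "sl2_E \<in> sl2" "sl2_F \<in> sl2"
  by (simp_all add: sl2_def sl2_E_def sl2_F_def sl2_H_def)

lemma sl2_basis_brackets:
  "sl2_bracket sl2_H sl2_E = 2 *\<^sub>R sl2_E"
  "sl2_bracket sl2_H sl2_F = (-2) *\<^sub>R sl2_F"
  "sl2_bracket sl2_E sl2_F = sl2_H"
  by (simp_all add: sl2_bracket_def sl2_E_def sl2_F_def sl2_H_def vec_eq_iff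
      matrix_matrix_mult_def UNIV_2 forall_2)

lemma lie_bracket_apply:
  assumes "lie_bracket A B = C"
  shows "A *v (B *v x) = B *v (A *v x) + C *v (x :: real^'n)"
proof -
  have "(A ** B - B ** A) *v x = C *v x" using assms by (simp add: lie_bracket_def)
  then show ?thesis by (simp add: matrix_vector_mult_diff_rdistrib matrix_vector_mul_assoc algebra_simps)
qed

lemma lie_hom_sl2_triple:
  assumes hom: "lie_hom_sl2 \<mu> g"
  shows "sl2_triple (\<mu> sl2_H) (\<mu> sl2_E) (\<mu> sl2_F)"
proof -
  have lin: "\<forall>X\<in>sl2. \<forall>Y\<in>sl2. \<forall>s t. \<mu> (s *\<^sub>R X + t *\<^sub>R Y) = s *\<^sub>R \<mu> X + t *\<^sub>R \<mu> Y"
    and br: "\<forall>X\<in>sl2. \<forall>Y\<in>sl2. \<mu> (sl2_bracket X Y) = lie_bracket (\<mu> X) (\<mu> Y)"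
    using hom unfolding lie_hom_sl2_def by auto
  have scale: "\<mu> (c *\<^sub>R X) = c *\<^sub>R \<mu> X" if "X \<in> sl2" for c X
    using lin that by (metis add.right_neutral scaleR_zero_left)
  have br': "lie_bracket (\<mu> X) (\<mu> Y) = \<mu> (sl2_bracket X Y)" if "X \<in> sl2" "Y \<in> sl2" for X Y
    using br that by simp
  have "lie_bracket (\<mu> sl2_H) (\<mu> sl2_E) = 2 *\<^sub>R \<mu> sl2_E"
    "lie_bracket (\<mu> sl2_H) (\<mu> sl2_F) = (-2) *\<^sub>R \<mu> sl2_F"
    "lie_bracket (\<mu> sl2_E) (\<mu> sl2_F) = \<mu> sl2_H"
    unfolding br'[OF sl2_basis_mem(1,2)] br'[OF sl2_basis_mem(1,3)] br'[OF sl2_basis_mem(2,3)]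
      sl2_basis_brackets scale[OF sl2_basis_mem(2)] scale[OF sl2_basis_mem(3)] by simp_all
  note relations = this[THEN lie_bracket_apply]
  show ?thesis
    by unfold_locales
      (simp_all add: relations scaleR_matrix_vector_assoc[symmetric] uminus_matrix_vector_mult)
qed

lemma highest_weight_attained:
  assumes triple: "sl2_triple (\<mu> sl2_H) (\<mu> sl2_E) (\<mu> sl2_F)" and irr: "sl2_irreducible \<mu> V"
  shows "\<exists>v\<in>V. v \<noteq> 0 \<and> \<mu> sl2_H *v v = highest_weight \<mu> V *\<^sub>R v"
proof -
  let ?S = "{w. \<exists>v\<in>V. v \<noteq> 0 \<and> \<mu> sl2_H *v v = w *\<^sub>R v}"
  have "subspace V" "V \<noteq> {0}" "\<And>X v. X \<in> sl2 \<Longrightarrow> v \<in> V \<Longrightarrow> \<mu> X *v v \<in> V"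
    using irr unfolding sl2_irreducible_def sl2_invariant_def by auto
  then have "?S \<noteq> {}"
    using sl2_triple.invariant_subspace_eigenvector[OF triple] sl2_basis_mem by blast
  moreover have "finite ?S"
    using sl2_triple.finite_weights[OF triple]
    by (rule finite_subset[rotated]) (auto simp: sl2_triple.weights_def[OF triple])
  ultimately have "Max ?S \<in> ?S" by (rule Max_in[rotated])
  then show ?thesis unfolding highest_weight_def by blast
qed

lemma decomposition_vectors_independent:
  assumes dec: "irred_decomposition \<mu> \<V>" and V: "V1 \<in> \<V>" "V2 \<in> \<V>" "V1 \<noteq> V2"
    and v: "v1 \<in> V1" "v2 \<in> V2" "v2 \<noteq> 0"
  shows "v2 \<notin> span {v1}"
proof
  assume "v2 \<in> span {v1}"
  moreover have "v1 \<in> span (\<Union>(\<V> - {V2}))" using v V by (intro span_base) auto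
  ultimately have "v2 \<in> span (\<Union>(\<V> - {V2}))"
    by (auto simp: span_singleton intro: span_mul)
  then show False using dec V(2) v(2,3) unfolding irred_decomposition_def by blast
qed

theorem lemma5p3:
  fixes g :: "(real^'n^'n) set"
    and wedge :: "real^'n \<Rightarrow> real^'n \<Rightarrow> real^'n \<Rightarrow> real"
    and \<mu> :: "real^2^2 \<Rightarrow> real^'n^'n"
  assumes ss: "semisimple g"
    and wedge_dual: "\<forall>a b. linear (wedge a b)"
    and wedge_lin: "\<forall>b c. linear (\<lambda>a. wedge a b c)"
    and wedge_sym: "\<forall>a b. wedge a b = wedge b a"
    and wedge_equiv: "\<forall>X\<in>g. \<forall>a b c.
        wedge (X *v a) b c + wedge a (X *v b) c = - wedge a b (X *v c)"
    and wedge_nonvan: "\<forall>U. subspace U \<and> dim U = 2 \<longrightarrow>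
        (\<exists>a\<in>U. \<exists>b\<in>U. \<exists>c. wedge a b c \<noteq> 0)"
    and hom: "lie_hom_sl2 \<mu> g"
    and inj: "inj_on \<mu> sl2"
  shows "\<forall>\<V>. irred_decomposition \<mu> \<V> \<longrightarrow>
           (\<forall>V\<in>\<V>. highest_weight \<mu> V \<le> 4) \<and>
           card {V\<in>\<V>. highest_weight \<mu> V = 4} \<le> 1"
proof (intro allI impI conjI)
  have triple: "sl2_triple (\<mu> sl2_H) (\<mu> sl2_E) (\<mu> sl2_F)" using hom by (rule lie_hom_sl2_triple)
  have "\<mu> sl2_H \<in> g" using hom sl2_basis_mem unfolding lie_hom_sl2_def by blast
  then interpret sl2_wedge "\<mu> sl2_H" "\<mu> sl2_E" "\<mu> sl2_F" wedge
    using triple wedge_dual wedge_lin wedge_sym wedge_equiv wedge_nonvan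
    by (simp add: sl2_wedge_def sl2_wedge_axioms_def)
  fix \<V> assume dec: "irred_decomposition \<mu> \<V>"
  have top: "\<exists>v\<in>V. v \<noteq> 0 \<and> \<mu> sl2_H *v v = highest_weight \<mu> V *\<^sub>R v"
    "highest_weight \<mu> V \<le> 4" if "V \<in> \<V>" for V
    using highest_weight_attained[OF triple] dec that top_weight(2) top_weight_le_4
    unfolding irred_decomposition_def weights_def by (blast, fastforce)
  then show "\<forall>V\<in>\<V>. highest_weight \<mu> V \<le> 4" by blast
  text \<open>Two summands of highest weight 4 would give two independent top weight vectors.\<close>
  have "V1 = V2" if V: "V1 \<in> \<V>" "V2 \<in> \<V>" "highest_weight \<mu> V1 = 4" "highest_weight \<mu> V2 = 4"
    for V1 V2
  proof (rule ccontr)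
    assume "V1 \<noteq> V2"
    obtain v1 v2 where v1: "v1 \<in> V1" "v1 \<noteq> 0" "\<mu> sl2_H *v v1 = 4 *\<^sub>R v1"
      and v2: "v2 \<in> V2" "v2 \<noteq> 0" "\<mu> sl2_H *v v2 = 4 *\<^sub>R v2"
      using top(1)[OF V(1)] top(1)[OF V(2)] V(3,4) by metis
    have "top_weight = 4"
      using top_weight(2) top_weight_le_4 v1(2,3) unfolding weights_def by fastforce
    then have "v2 \<in> span {v1}" using top_weight_vectors_dependent v1(2,3) v2(3) by simp
    then show False using decomposition_vectors_independent dec V(1,2) \<open>V1 \<noteq> V2\<close> v1(1) v2 by blast
  qed
  then show "card {V\<in>\<V>. highest_weight \<mu> V = 4} \<le> 1"
    using dec unfolding irred_decomposition_def by (auto simp: card_le_Suc0_iff_eq)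
qed

end
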